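(* Let $\mathcal{A}=\{1,\dots,n\}$ be a set of agents connected by a directed chain $1\to 2\to\cdots\to n$. Each agent $i$ has a finite local strategy set $\mathcal{P}_i$, the sets $\mathcal{P}_1,\dots,\mathcal{P}_n$ pairwise disjoint, and an integer budget $\kappa_i\ge 1$. Let $\mathcal{P}=\bigcup_{i\in\mathcal{A}}\mathcal{P}_i$. Let $f:2^{\mathcal{P}}\to\mathbb{R}_{\ge 0}$ be normal ($f(\emptyset)=0$), monotone nondecreasing and submodular. Let $\mathcal{S}^\star$ be a maximizer of $f(\mathcal{S})$ over $\mathcal{I}=\{\mathcal{S}\subset\mathcal{P} : |\mathcal{S}\cap\mathcal{P}_i|\le\kappa_i \ \forall i\in\mathcal{A}\}$. The agents run the decentralized sequential greedy algorithm, in which each message transmission may fail. Agent $1$ starts from $\bar{\mathcal{S}}_0=\emptyset$. For $i\ge 2$, agent $i$ starts from the set $\bar{\mathcal{S}}_{i-1}$ if the message from agent $i-1$ was delivered, and from $\emptyset$ otherwise. Starting from this set, agent $i$ performs $\kappa_i$ greedy steps; in each step it adds to its current set an element $s\in\mathcal{P}_i$ not yet selected that maximizes the marginal gain $f(\text{current}\cup\{s\})-f(\text{current})$. Call the result $\bar{\mathcal{S}}_i$; agent $i$ then sends $\bar{\mathcal{S}}_i$ to agent $i+1$. The message from agent $i$ to agent $i+1$ is successfully delivered with probability $p_i$, for $i=1,\dots,n-1$. The output of the algorithm is $\bar{\mathcal{S}}=\bigcup_{i\in\mathcal{A}}\bar{\mathcal{S}}_i$. Let $\mathcal{W}(\mathcal{G}_I)$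 denote the (random) clique number of the information graph $\mathcal{G}_I$ of the run. Then $$\mathbb{E}[f(\bar{\mathcal{S}})]\ \ge\ \alpha_p\, f(\mathcal{S}^\star),\qquad\text{where } \alpha_p=\sum_{l=1}^{n}\frac{1}{2+n-l}\,P\big(\mathcal{W}(\mathcal{G}_I)=l\big).$$
   Context: The information graph $\mathcal{G}_I$ of a run is the directed graph on $\mathcal{A}$ with an arc from agent $i$ to agent $j$ whenever agent $j$ has received agent $i$'s information, either directly or relayed through intermediate agents along the chain. Equivalently, there is an arc $i\to j$ for $i<j$ exactly when all messages $i\to i+1,\dots,j-1\to j$ were delivered. The clique number $\mathcal{W}(\mathcal{G}_I)$ is the size of the largest complete subgraph of the undirected version of $\mathcal{G}_I$. It equals one plus the length of the longest run of consecutive successfully delivered chain edges, and it equals $n$ when all messages are delivered. *)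

theory Defs
  imports Complex_Main
begin

text \<open>Agents are 1..n; chain edge i (1 <= i < n) is the message from agent i to agent i+1.
  A run outcome is the set D of delivered edges, D a subset of {1..<n}.\<close>

definition normal_fn :: "('a set \<Rightarrow> real) \<Rightarrow> bool" where
  "normal_fn f \<longleftrightarrow> f {} = 0"

definition monotone_fn :: "'a set \<Rightarrow> ('a set \<Rightarrow> real) \<Rightarrow> bool" where
  "monotone_fn U f \<longleftrightarrow> (\<forall>A B. A \<subseteq> B \<and> B \<subseteq> U \<longrightarrow> f A \<le> f B)"

definition submodular_fn :: "'a set \<Rightarrow> ('a set \<Rightarrow> real) \<Rightarrow> bool" where
  "submodular_fn U f \<longleftrightarrow> (\<forall>A B x. A \<subseteq> B \<and> B \<subseteq> U \<and> x \<in> U - B \<longrightarrow>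
       f (insert x B) - f B \<le> f (insert x A) - f A)"

definition feasible :: "nat \<Rightarrow> (nat \<Rightarrow> 'a set) \<Rightarrow> (nat \<Rightarrow> nat) \<Rightarrow> 'a set set" where
  "feasible n P \<kappa> = {S. S \<subseteq> (\<Union>i\<in>{1..n}. P i) \<and> (\<forall>i\<in>{1..n}. card (S \<inter> P i) \<le> \<kappa> i)}"

definition greedy_choice :: "('a set \<Rightarrow> real) \<Rightarrow> 'a set \<Rightarrow> 'a set \<Rightarrow> 'a \<Rightarrow> bool" where
  "greedy_choice f Pi cur s \<longleftrightarrow> s \<in> Pi - cur \<and>
     (\<forall>t \<in> Pi - cur. f (insert t cur) - f cur \<le> f (insert s cur) - f cur)"

inductive greedy_steps :: "('a set \<Rightarrow> real) \<Rightarrow> 'a set \<Rightarrow> nat \<Rightarrow> 'a set \<Rightarrow> 'a set \<Rightarrow> bool"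
  for f Pi where
  zero: "greedy_steps f Pi 0 T T"
| step: "greedy_steps f Pi k T R \<Longrightarrow> greedy_choice f Pi R s \<Longrightarrow> greedy_steps f Pi (Suc k) T (insert s R)"
| exhausted: "greedy_steps f Pi k T R \<Longrightarrow> Pi - R = {} \<Longrightarrow> greedy_steps f Pi (Suc k) T R"

definition start_set :: "nat set \<Rightarrow> (nat \<Rightarrow> 'a set) \<Rightarrow> nat \<Rightarrow> 'a set" where
  "start_set D Sbar i = (if i \<ge> 2 \<and> i - 1 \<in> D then Sbar (i - 1) else {})"

definition valid_run :: "nat \<Rightarrow> (nat \<Rightarrow> 'a set) \<Rightarrow> (nat \<Rightarrow> nat) \<Rightarrow> ('a set \<Rightarrow> real)
    \<Rightarrow> nat set \<Rightarrow> (nat \<Rightarrow> 'a set) \<Rightarrow> bool" where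
  "valid_run n P \<kappa> f D Sbar \<longleftrightarrow>
     (\<forall>i\<in>{1..n}. greedy_steps f (P i) (\<kappa> i) (start_set D Sbar i) (Sbar i))"

definition outcome_prob :: "nat \<Rightarrow> (nat \<Rightarrow> real) \<Rightarrow> nat set \<Rightarrow> real" where
  "outcome_prob n p D = (\<Prod>i\<in>{1..<n}. if i \<in> D then p i else 1 - p i)"

definition info_arc :: "nat set \<Rightarrow> nat \<Rightarrow> nat \<Rightarrow> bool" where
  "info_arc D i j \<longleftrightarrow> i < j \<and> (\<forall>k. i \<le> k \<and> k < j \<longrightarrow> k \<in> D)"

definition clique_number :: "nat \<Rightarrow> nat set \<Rightarrow> nat" where
  "clique_number n D = Max {card K | K. K \<subseteq> {1..n} \<and>
      (\<forall>i\<in>K. \<forall>j\<in>K. i \<noteq> j \<longrightarrow> info_arc D i j \<or> info_arc D j i)}"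

end

theory Submission
  imports Defs
begin

text \<open>Fix a delivery outcome \<open>D\<close> and let \<open>G\<close> be the union of the local selections \<open>S\<^sub>i\<close>. By
  monotonicity and submodularity, \<open>f S\<^sup>\<star>\<close> is at most \<open>f G\<close> plus the marginal gains over \<open>G\<close> of
  the elements of \<open>S\<^sup>\<star> - G\<close>. Such an element of \<open>P\<^sub>i\<close> was available to each of agent \<open>i\<close>'s
  \<open>\<kappa>\<^sub>i\<close> greedy steps, so by submodularity its marginal gain is at most a \<open>1/\<kappa>\<^sub>i\<close> share of
  agent \<open>i\<close>'s gain \<open>f S\<^sub>i - f start\<^sub>i\<close>; as at most \<open>\<kappa>\<^sub>i\<close> of them lie in \<open>P\<^sub>i\<close>, the total is at
  most the sum of the agents' gains. The starting sets are exactly the \<open>S\<^sub>j\<close> with \<open>j \<in> D\<close>, so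
  this sum telescopes to the sum of \<open>f S\<^sub>i\<close> over the \<open>n - |D|\<close> agents \<open>i \<notin> D\<close>, which is at
  most \<open>(n - |D|) f G\<close>. Hence \<open>f S\<^sup>\<star> \<le> (1 + n - |D|) f G\<close>. A clique of the information graph
  lies in an interval of agents whose chain edges are all delivered, so the clique number is
  at most \<open>|D| + 1\<close>, and averaging over the outcomes gives the claim.\<close>

lemma monotone_fnD: "monotone_fn U f \<Longrightarrow> A \<subseteq> B \<Longrightarrow> B \<subseteq> U \<Longrightarrow> f A \<le> f B"
  unfolding monotone_fn_def by blast

lemma submodular_fnD:
  "submodular_fn U f \<Longrightarrow> A \<subseteq> B \<Longrightarrow> B \<subseteq> U \<Longrightarrow> x \<in> U - B \<Longrightarrow>
    f (insert x B) - f B \<le> f (insert x A) - f A"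
  unfolding submodular_fn_def by blast

lemma greedy_steps_start_subset: "greedy_steps f Pi k T R \<Longrightarrow> T \<subseteq> R"
  by (induction rule: greedy_steps.induct) auto

lemma greedy_steps_subset: "greedy_steps f Pi k T R \<Longrightarrow> R \<subseteq> T \<union> Pi"
  by (induction rule: greedy_steps.induct) (auto simp: greedy_choice_def)

lemma greedy_steps_gain_ge:
  assumes "greedy_steps f Pi k T R" "submodular_fn U f"
    and "R \<subseteq> G" "G \<subseteq> U" "x \<in> Pi - G" "x \<in> U"
  shows "real k * (f (insert x G) - f G) \<le> f R - f T"
  using assms
proof (induction rule: greedy_steps.induct)
  case zero
  then show ?case by simp
next
  case (step k T R s)
  have "real k * (f (insert x G) - f G) \<le> f R - f T"
    using step by auto
  moreover have "f (insert x G) - f G \<le> f (insert x R) - f R"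
    using step.prems by (intro submodular_fnD[of U]) auto
  moreover have "f (insert x R) - f R \<le> f (insert s R) - f R"
    using step.hyps(2) step.prems unfolding greedy_choice_def by auto
  ultimately show ?case by (simp add: algebra_simps)
next
  case exhausted
  then show ?case by auto
qed

lemma greedy_steps_sum_gains_le:
  assumes "greedy_steps f Pi k T R" "submodular_fn U f" "monotone_fn U f"
    and "R \<subseteq> G" "G \<subseteq> U" "B \<subseteq> Pi \<inter> U" "finite B" "card B \<le> k"
  shows "(\<Sum>x\<in>B - G. f (insert x G) - f G) \<le> f R - f T"
proof -
  define \<Delta> where "\<Delta> = f R - f T"
  have "T \<subseteq> R" using assms(1) by (rule greedy_steps_start_subset)
  then have "0 \<le> \<Delta>"
    using assms(3-5) unfolding \<Delta>_def by (auto intro: monotone_fnD)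
  have marginal_le: "f (insert x G) - f G \<le> \<Delta> / real k" if "x \<in> B - G" "k > 0" for x
  proof -
    have "real k * (f (insert x G) - f G) \<le> \<Delta>"
      unfolding \<Delta>_def using assms that by (intro greedy_steps_gain_ge) auto
    then show ?thesis using that(2) by (simp add: field_simps)
  qed
  have "(\<Sum>x\<in>B - G. f (insert x G) - f G) \<le> real (card (B - G)) * (\<Delta> / real k)"
  proof (cases "k = 0")
    case True
    then show ?thesis using assms(7,8) by simp
  next
    case False
    then show ?thesis using marginal_le by (intro sum_bounded_above) auto
  qed
  also have "\<dots> \<le> real k * (\<Delta> / real k)"
    using \<open>0 \<le> \<Delta>\<close> card_mono[OF \<open>finite B\<close>, of "B - G"] assms(8)
    by (intro mult_right_mono) auto
  also have "\<dots> \<le> \<Delta>"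
    using \<open>0 \<le> \<Delta>\<close> by (cases "k = 0") auto
  finally show ?thesis unfolding \<Delta>_def .
qed

lemma submodular_le_sum_marginals:
  assumes "submodular_fn U f" "finite A" "A \<subseteq> U" "G \<subseteq> U"
  shows "f (G \<union> A) - f G \<le> (\<Sum>x\<in>A - G. f (insert x G) - f G)"
  using assms(2,3)
proof (induction A rule: finite_induct)
  case empty
  then show ?case by simp
next
  case (insert a A)
  show ?case
  proof (cases "a \<in> G")
    case True
    then have "G \<union> insert a A = G \<union> A" "insert a A - G = A - G" by auto
    then show ?thesis using insert by simp
  next
    case False
    have "f (insert a (G \<union> A)) - f (G \<union> A) \<le> f (insert a G) - f G"
      using assms(1,4) insert False by (intro submodular_fnD[of U]) auto
    moreover have "insert a A - G = insert a (A - G)" "G \<union> insert a A = insert a (G \<union> A)"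
      using False by auto
    ultimately show ?thesis using insert by simp
  qed
qed

lemma card_info_clique_le:
  assumes "finite K" "finite D"
    and clique: "\<forall>i\<in>K. \<forall>j\<in>K. i \<noteq> j \<longrightarrow> info_arc D i j \<or> info_arc D j i"
  shows "card K \<le> card D + 1"
proof (cases "K = {}")
  case True
  then show ?thesis by simp
next
  case False
  define a where "a = Min K"
  define b where "b = Max K"
  have "a \<in> K" "b \<in> K" "K \<subseteq> {a..b}"
    using \<open>finite K\<close> False unfolding a_def b_def by auto
  have "{a..<b} \<subseteq> D"
  proof (cases "a = b")
    case False
    then have "a < b" using \<open>K \<subseteq> {a..b}\<close> \<open>b \<in> K\<close> by auto
    moreover have "info_arc D a b \<or> info_arc D b a"
      using clique \<open>a \<in> K\<close> \<open>b \<in> K\<close> False by blast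
    ultimately have "info_arc D a b" unfolding info_arc_def by auto
    then show ?thesis unfolding info_arc_def by auto
  qed simp
  have "card K \<le> card {a..b}" using \<open>K \<subseteq> {a..b}\<close> by (intro card_mono) auto
  also have "\<dots> \<le> card {a..<b} + 1" by simp
  also have "\<dots> \<le> card D + 1" using card_mono[OF \<open>finite D\<close> \<open>{a..<b} \<subseteq> D\<close>] by simp
  finally show ?thesis .
qed

lemma clique_number_le_card_Suc:
  assumes "finite D"
  shows "clique_number n D \<le> card D + 1"
proof -
  let ?sizes = "{card K | K. K \<subseteq> {1..n} \<and>
      (\<forall>i\<in>K. \<forall>j\<in>K. i \<noteq> j \<longrightarrow> info_arc D i j \<or> info_arc D j i)}"
  have bounded: "c \<le> card D + 1" if c: "c \<in> ?sizes" for c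
  proof -
    obtain K where "c = card K" "K \<subseteq> {1..n}"
      "\<forall>i\<in>K. \<forall>j\<in>K. i \<noteq> j \<longrightarrow> info_arc D i j \<or> info_arc D j i"
      using c by blast
    then show ?thesis
      by (metis assms card_info_clique_le finite_atLeastAtMost finite_subset)
  qed
  have "0 \<in> ?sizes" by (intro CollectI exI[of _ "{}"]) simp
  moreover have "?sizes \<subseteq> {..card D + 1}"
    using bounded by blast
  ultimately show ?thesis
    unfolding clique_number_def using bounded
    by (intro Max.boundedI) (auto intro: finite_subset)
qed

lemma valid_run_subset:
  assumes "valid_run n P \<kappa> f D Sb" "i \<in> {1..n}"
  shows "Sb i \<subseteq> (\<Union>j\<in>{1..n}. P j)"
  using assms(2)
proof (induction i)
  case 0
  then show ?case by simp
next
  case (Suc i)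
  have "greedy_steps f (P (Suc i)) (\<kappa> (Suc i)) (start_set D Sb (Suc i)) (Sb (Suc i))"
    using assms(1) Suc.prems unfolding valid_run_def by blast
  then have "Sb (Suc i) \<subseteq> start_set D Sb (Suc i) \<union> P (Suc i)"
    by (rule greedy_steps_subset)
  moreover have "start_set D Sb (Suc i) \<subseteq> (\<Union>j\<in>{1..n}. P j)"
    using Suc unfolding start_set_def by auto
  moreover have "P (Suc i) \<subseteq> (\<Union>j\<in>{1..n}. P j)"
    using Suc.prems by blast
  ultimately show ?case by blast
qed

lemma sum_start_set:
  assumes "D \<subseteq> {1..<n}" "f {} = 0"
  shows "(\<Sum>i\<in>{1..n}. f (start_set D Sb i)) = (\<Sum>j\<in>D. f (Sb j))"
proof -
  have "(\<Sum>i\<in>{1..n}. f (start_set D Sb i)) = (\<Sum>i\<in>{Suc 0..<Suc n}. f (start_set D Sb i))"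
    by (simp add: atLeastLessThanSuc_atLeastAtMost)
  also have "\<dots> = (\<Sum>j\<in>{0..<n}. f (start_set D Sb (Suc j)))"
    by (rule sum.shift_bounds_Suc_ivl)
  also have "\<dots> = (\<Sum>j\<in>{0..<n}. if j \<in> D then f (Sb j) else 0)"
    using assms by (intro sum.cong) (auto simp: start_set_def)
  also have "\<dots> = (\<Sum>j\<in>D. f (Sb j))"
    using assms(1) by (simp add: sum.If_cases Int_absorb1 subset_eq)
  finally show ?thesis .
qed

lemma sum_gains_start_set_le:
  assumes "D \<subseteq> {1..<n}" "f {} = 0" "\<forall>i\<in>{1..n}. f (Sb i) \<le> M"
  shows "(\<Sum>i\<in>{1..n}. f (Sb i) - f (start_set D Sb i)) \<le> (real n - real (card D)) * M"
proof -
  have "D \<subseteq> {1..n}" "finite D" using assms(1) finite_subset by auto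
  have "(\<Sum>i\<in>{1..n}. f (Sb i) - f (start_set D Sb i)) = (\<Sum>i\<in>{1..n} - D. f (Sb i))"
    using sum.subset_diff[OF \<open>D \<subseteq> {1..n}\<close>, of "\<lambda>i. f (Sb i)"]
      sum_start_set[where f = f and Sb = Sb, OF assms(1,2)]
    by (simp add: sum_subtractf)
  also have "\<dots> \<le> real (card ({1..n} - D)) * M"
    using assms(3) by (intro sum_bounded_above) auto
  also have "card ({1..n} - D) = n - card D"
    using card_Diff_subset[OF \<open>finite D\<close> \<open>D \<subseteq> {1..n}\<close>] by simp
  also have "real (n - card D) = real n - real (card D)"
    using card_mono[OF _ \<open>D \<subseteq> {1..n}\<close>] by (simp add: of_nat_diff)
  finally show ?thesis .
qed

lemma valid_run_sum_marginals_le: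
  fixes n :: nat and P Sb :: "nat \<Rightarrow> 'a set"
  defines "U \<equiv> \<Union>i\<in>{1..n}. P i" and "G \<equiv> \<Union>i\<in>{1..n}. Sb i"
  assumes fin: "\<forall>i\<in>{1..n}. finite (P i)"
    and disj: "\<forall>i\<in>{1..n}. \<forall>j\<in>{1..n}. i \<noteq> j \<longrightarrow> P i \<inter> P j = {}"
    and mono: "monotone_fn U f" and submod: "submodular_fn U f"
    and feas: "S \<in> feasible n P \<kappa>" and run: "valid_run n P \<kappa> f D Sb"
  shows "(\<Sum>x\<in>S - G. f (insert x G) - f G) \<le> (\<Sum>i\<in>{1..n}. f (Sb i) - f (start_set D Sb i))"
proof -
  define gain where "gain x = f (insert x G) - f G" for x
  have "S \<subseteq> U" and card_S: "\<forall>i\<in>{1..n}. card (S \<inter> P i) \<le> \<kappa> i"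
    using feas unfolding feasible_def U_def by auto
  have "finite U" using fin unfolding U_def by simp
  then have "finite S" using \<open>S \<subseteq> U\<close> by (rule finite_subset[rotated])
  have "G \<subseteq> U"
    using valid_run_subset[OF run] unfolding G_def U_def by blast
  have "S - G = (\<Union>i\<in>{1..n}. S \<inter> P i - G)"
    using \<open>S \<subseteq> U\<close> unfolding U_def by blast
  then have "(\<Sum>x\<in>S - G. gain x) = (\<Sum>i\<in>{1..n}. \<Sum>x\<in>S \<inter> P i - G. gain x)"
    using \<open>finite S\<close> disj by (simp only:) (intro sum.UNION_disjoint; auto)
  also have "\<dots> \<le> (\<Sum>i\<in>{1..n}. f (Sb i) - f (start_set D Sb i))"
  proof (rule sum_mono)
    fix i assume i: "i \<in> {1..n}"
    have steps: "greedy_steps f (P i) (\<kappa> i) (start_set D Sb i) (Sb i)"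
      using run i unfolding valid_run_def by blast
    have "Sb i \<subseteq> G" using i unfolding G_def by blast
    moreover have "S \<inter> P i \<subseteq> P i \<inter> U" using \<open>S \<subseteq> U\<close> by blast
    moreover have "finite (S \<inter> P i)" using \<open>finite S\<close> by simp
    moreover have "card (S \<inter> P i) \<le> \<kappa> i" using card_S i by blast
    ultimately show "(\<Sum>x\<in>S \<inter> P i - G. gain x) \<le> f (Sb i) - f (start_set D Sb i)"
      unfolding gain_def by (rule greedy_steps_sum_gains_le[OF steps submod mono _ \<open>G \<subseteq> U\<close>])
  qed
  finally show ?thesis unfolding gain_def .
qed

lemma valid_run_approximation:
  fixes n :: nat and P Sb :: "nat \<Rightarrow> 'a set"
  defines "U \<equiv> \<Union>i\<in>{1..n}. P i" and "G \<equiv> \<Union>i\<in>{1..n}. Sb i"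
  assumes fin: "\<forall>i\<in>{1..n}. finite (P i)"
    and disj: "\<forall>i\<in>{1..n}. \<forall>j\<in>{1..n}. i \<noteq> j \<longrightarrow> P i \<inter> P j = {}"
    and norm: "normal_fn f" and mono: "monotone_fn U f" and submod: "submodular_fn U f"
    and feas: "S \<in> feasible n P \<kappa>" and D: "D \<subseteq> {1..<n}" and run: "valid_run n P \<kappa> f D Sb"
  shows "f S \<le> (1 + real n - real (card D)) * f G"
proof -
  have "S \<subseteq> U" using feas unfolding feasible_def U_def by auto
  have "finite S" using \<open>S \<subseteq> U\<close> fin unfolding U_def by (auto elim: finite_subset)
  have "G \<subseteq> U"
    using valid_run_subset[OF run] unfolding G_def U_def by blast
  have "f S \<le> f (G \<union> S)"
    using mono \<open>S \<subseteq> U\<close> \<open>G \<subseteq> U\<close> by (intro monotone_fnD[of U]) auto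
  also have "\<dots> \<le> f G + (\<Sum>x\<in>S - G. f (insert x G) - f G)"
    using submodular_le_sum_marginals[OF submod \<open>finite S\<close> \<open>S \<subseteq> U\<close> \<open>G \<subseteq> U\<close>] by linarith
  also have "\<dots> \<le> f G + (\<Sum>i\<in>{1..n}. f (Sb i) - f (start_set D Sb i))"
    using valid_run_sum_marginals_le[OF fin disj mono[unfolded U_def] submod[unfolded U_def] feas run]
    unfolding G_def by simp
  also have "\<dots> \<le> f G + (real n - real (card D)) * f G"
  proof -
    have "\<forall>i\<in>{1..n}. f (Sb i) \<le> f G"
      using mono \<open>G \<subseteq> U\<close> unfolding G_def by (blast intro: monotone_fnD)
    moreover have "f {} = 0" using norm unfolding normal_fn_def .
    ultimately show ?thesis
      using sum_gains_start_set_le[where f = f and Sb = Sb and M = "f G", OF D] by simp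
  qed
  finally show ?thesis by (simp add: algebra_simps)
qed

lemma valid_run_clique_approximation:
  fixes n :: nat and P Sb :: "nat \<Rightarrow> 'a set"
  defines "U \<equiv> \<Union>i\<in>{1..n}. P i" and "G \<equiv> \<Union>i\<in>{1..n}. Sb i"
  assumes fin: "\<forall>i\<in>{1..n}. finite (P i)"
    and disj: "\<forall>i\<in>{1..n}. \<forall>j\<in>{1..n}. i \<noteq> j \<longrightarrow> P i \<inter> P j = {}"
    and norm: "normal_fn f" and mono: "monotone_fn U f" and submod: "submodular_fn U f"
    and feas: "S \<in> feasible n P \<kappa>" and D: "D \<subseteq> {1..<n}" and run: "valid_run n P \<kappa> f D Sb"
  shows "f S / (2 + real n - real (clique_number n D)) \<le> f G"
proof -
  define d where "d = 2 + real n - real (clique_number n D)"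
  have "finite D" using D finite_subset by blast
  have "card D \<le> n" using card_mono[OF _ D] by simp
  have "1 + real n - real (card D) \<le> d"
    using clique_number_le_card_Suc[OF \<open>finite D\<close>, of n] unfolding d_def by linarith
  have "G \<subseteq> U"
    using valid_run_subset[OF run] unfolding G_def U_def by blast
  then have "0 \<le> f G"
    using mono norm monotone_fnD[of U f "{}" G] unfolding normal_fn_def by simp
  have "f S \<le> (1 + real n - real (card D)) * f G"
    unfolding G_def
    by (rule valid_run_approximation[OF fin disj norm mono[unfolded U_def] submod[unfolded U_def] feas D run])
  also have "\<dots> \<le> d * f G"
    using \<open>1 + real n - real (card D) \<le> d\<close> \<open>0 \<le> f G\<close> by (rule mult_right_mono)
  finally have "f S \<le> d * f G" .
  moreover have "0 < d"
    using \<open>1 + real n - real (card D) \<le> d\<close> \<open>card D \<le> n\<close> by linarith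
  ultimately show ?thesis unfolding d_def[symmetric] by (simp add: divide_le_eq mult.commute)
qed

lemma sum_level_sets_weighted:
  fixes c w :: "_ \<Rightarrow> 'b::semiring_0"
  assumes "finite A" "finite L"
  shows "(\<Sum>l\<in>L. c l * (\<Sum>x\<in>{x\<in>A. h x = l}. w x)) = (\<Sum>x\<in>{x\<in>A. h x \<in> L}. c (h x) * w x)"
proof -
  have level: "c l * (\<Sum>x\<in>{x\<in>A. h x = l}. w x) = (\<Sum>x\<in>{x\<in>{x\<in>A. h x \<in> L}. h x = l}. c (h x) * w x)"
    if "l \<in> L" for l
  proof -
    have "c l * (\<Sum>x\<in>{x\<in>A. h x = l}. w x) = (\<Sum>x\<in>{x\<in>A. h x = l}. c (h x) * w x)"
      unfolding sum_distrib_left by (rule sum.cong) auto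
    moreover have "{x\<in>{x\<in>A. h x \<in> L}. h x = l} = {x\<in>A. h x = l}" using that by auto
    ultimately show ?thesis by simp
  qed
  have "(\<Sum>l\<in>L. (\<Sum>x\<in>{x\<in>{x\<in>A. h x \<in> L}. h x = l}. c (h x) * w x))
      = (\<Sum>x\<in>{x\<in>A. h x \<in> L}. c (h x) * w x)"
    using assms by (intro sum.group) auto
  then show ?thesis using level by simp
qed

lemma outcome_prob_nonneg:
  assumes "\<forall>i\<in>{1..<n}. 0 \<le> p i \<and> p i \<le> 1"
  shows "0 \<le> outcome_prob n p D"
  unfolding outcome_prob_def using assms by (intro prod_nonneg) auto

theorem theorem1:
  fixes n :: nat and P :: "nat \<Rightarrow> 'a set" and \<kappa> :: "nat \<Rightarrow> nat"
    and f :: "'a set \<Rightarrow> real" and p :: "nat \<Rightarrow> real"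
    and Sopt :: "'a set" and Sbar :: "nat set \<Rightarrow> nat \<Rightarrow> 'a set"
  assumes fin: "\<forall>i\<in>{1..n}. finite (P i)"
    and disj: "\<forall>i\<in>{1..n}. \<forall>j\<in>{1..n}. i \<noteq> j \<longrightarrow> P i \<inter> P j = {}"
    and budget: "\<forall>i\<in>{1..n}. \<kappa> i \<ge> 1"
    and nonneg: "\<forall>S. S \<subseteq> (\<Union>i\<in>{1..n}. P i) \<longrightarrow> f S \<ge> 0"
    and norm: "normal_fn f"
    and mono: "monotone_fn (\<Union>i\<in>{1..n}. P i) f"
    and submod: "submodular_fn (\<Union>i\<in>{1..n}. P i) f"
    and opt: "Sopt \<in> feasible n P \<kappa>" "\<forall>S\<in>feasible n P \<kappa>. f S \<le> f Sopt"
    and prob: "\<forall>i\<in>{1..<n}. 0 \<le> p i \<and> p i \<le> 1"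
    and runs: "\<forall>D. D \<subseteq> {1..<n} \<longrightarrow> valid_run n P \<kappa> f D (Sbar D)"
  shows "(\<Sum>D\<in>Pow {1..<n}. outcome_prob n p D * f (\<Union>i\<in>{1..n}. Sbar D i))
         \<ge> (\<Sum>l=1..n. (1 / (2 + real n - real l)) *
               (\<Sum>D\<in>{D\<in>Pow {1..<n}. clique_number n D = l}. outcome_prob n p D)) * f Sopt"
proof -
  let ?outcomes = "Pow {1..<n}"
  let ?pr = "outcome_prob n p" and ?\<omega> = "clique_number n"
  define g where "g D = f (\<Union>i\<in>{1..n}. Sbar D i)" for D
  have pr_nonneg: "0 \<le> ?pr D" for D
    using prob by (rule outcome_prob_nonneg)
  have g_nonneg: "0 \<le> g D" if "D \<in> ?outcomes" for D
    using nonneg valid_run_subset[of n P \<kappa> f D "Sbar D"] runs that unfolding g_def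
    by (meson PowD UN_least)
  have "(\<Sum>l=1..n. 1 / (2 + real n - real l) * (\<Sum>D\<in>{D\<in>?outcomes. ?\<omega> D = l}. ?pr D)) * f Sopt
      = (\<Sum>D\<in>{D\<in>?outcomes. ?\<omega> D \<in> {1..n}}. 1 / (2 + real n - real (?\<omega> D)) * ?pr D) * f Sopt"
    by (subst sum_level_sets_weighted) simp_all
  also have "\<dots> = (\<Sum>D\<in>{D\<in>?outcomes. ?\<omega> D \<in> {1..n}}. ?pr D * (f Sopt / (2 + real n - real (?\<omega> D))))"
    by (simp add: sum_distrib_right)
  also have "\<dots> \<le> (\<Sum>D\<in>{D\<in>?outcomes. ?\<omega> D \<in> {1..n}}. ?pr D * g D)"
    using runs pr_nonneg unfolding g_def
    by (intro sum_mono mult_left_mono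
        valid_run_clique_approximation[OF fin disj norm mono submod opt(1)]) auto
  also have "\<dots> \<le> (\<Sum>D\<in>?outcomes. ?pr D * g D)"
    using pr_nonneg g_nonneg by (intro sum_mono2) auto
  finally show ?thesis unfolding g_def .
qed

end
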